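(* Assume $\mu_1=\mu_2=\mu_3=1$ and fix decision points. (i) If $\mathcal P$ is finite, then the triangle process has finitely many periodic orbits and every trajectory, from any starting point, converges onto one of them. (ii) (Whether or not $\mathcal P$ is finite.) If $z\notin\overline{\mathcal P}$ and the trajectory starting at $z$ converges onto the periodic orbit $u_1,\dots,u_m$, then there is $\varepsilon>0$ such that from every $z'\in\mathcal N_\varepsilon(z)$ there is a unique trajectory, and it converges onto this orbit. (iii) Any periodic orbit $u_1,\dots,u_m$ with $u_n\notin\overline{\mathcal P}$ for every $n$ is stable.
   Context: Fix $\rho_1,\rho_2,\rho_3\in(0,1)$ with $\rho_1+\rho_2+\rho_3>1$, $\mu_i=1$, $\theta:=\rho_1+\rho_2+\rho_3-1$. $A_i^0:=\{y\in\mathbb R^3: y_1+y_2+y_3=1, y_i=0, y_l\ge0\}$, $A^0:=\bigcup_iA_i^0$; for $z\in A^0\setminus A_j^0$, $f_j(z):=\sum_{i\neq j}\frac{(1-\rho_j)z_i+\rho_i z_j}{(1-\rho_j)+\theta z_j}e_i$. For $(\hat i,\hat j,\hat k)$ equal to $(1,2,3)$ or a cyclic permutation, $(1-x)e_{\hat j}+xe_{\hat k}\in A^0_{\hat i}$ is written $(x,\hat i)$, $\pi((x,\hat i)):=x$. $|z-z'|_1:=\|z-z'\|/\sqrt2$. Decision points $d_1,d_2,d_3\in(0,1)$ (identified with $(d_{\hat i},\hat i)$); switching rule $\mathfrak R((x,\hat i))=\hat j$ if $x<d_{\hat i}$, $\hat k$ if $x>d_{\hat i}$, both allowed if $x=d_{\hat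 i}$; $\varphi(z):=f_{\mathfrak R(z)}(z)$. A trajectory is $(z(t))_{t\ge0}$ with $z(t+1)\in\varphi(z(t))$. $z$ is a pre-image of $z'$ if some trajectory from $z$ has $z(t)=z'$ for some $t\ge1$. $\mathcal P$ is the set consisting of the decision points and all their pre-images; $\overline{\mathcal P}$ its closure. Periodic orbit: $u_1,\dots,u_m$ with $u_{n+1}\in\varphi(u_n)$, $u_1\in\varphi(u_m)$. A trajectory converges onto it if there is $n_0$ with $|z(mt+n+n_0)-u_n|_1\to0$ ($t\to\infty$) for each $n$. For $z=(x,\hat i)$, $\mathcal N_\varepsilon(z):=\{z'\in A^0_{\hat i}:|\pi(z')-x|<\varepsilon\}$. An orbit is stable if for each $n$ there is $\varepsilon>0$ such that all trajectories from any $z\in\mathcal N_\varepsilon(u_n)$ converge onto the orbit. *)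

theory Defs
  imports "HOL-Analysis.Analysis"
begin

(* Indices 1,2,3 of the paper are the elements 1,2,3 (= 0) of the numeral type 3.
   Cyclic triples (i,j,k) in {(1,2,3),(2,3,1),(3,1,2)} are exactly (i, i+1, i+2) mod 3.
   rho :: 3 => real are the loads rho_1,rho_2,rho_3 (mu_i = 1); d :: 3 => real the decision points. *)

type_synonym pt = "real ^ 3"

definition e :: "3 \<Rightarrow> pt" where
  "e i = axis i 1"

definition theta :: "(3 \<Rightarrow> real) \<Rightarrow> real" where
  "theta \<rho> = \<rho> 1 + \<rho> 2 + \<rho> 3 - 1"

definition A0i :: "3 \<Rightarrow> pt set" where
  "A0i i = {y. y$1 + y$2 + y$3 = 1 \<and> y$i = 0 \<and> (\<forall>l. y$l \<ge> 0)}"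

definition A0 :: "pt set" where
  "A0 = (\<Union>i. A0i i)"

definition f :: "(3 \<Rightarrow> real) \<Rightarrow> 3 \<Rightarrow> pt \<Rightarrow> pt" where
  "f \<rho> j z = (\<Sum>i\<in>UNIV - {j}.
      (((1 - \<rho> j) * z$i + \<rho> i * z$j) / ((1 - \<rho> j) + theta \<rho> * z$j)) *\<^sub>R e i)"

definition P :: "3 \<Rightarrow> real \<Rightarrow> pt" where
  "P i x = (1 - x) *\<^sub>R e (i + 1) + x *\<^sub>R e (i + 2)"

definition rule :: "(3 \<Rightarrow> real) \<Rightarrow> pt \<Rightarrow> 3 set" where
  "rule d z = {j. \<exists>i x. 0 \<le> x \<and> x \<le> 1 \<and> z = P i x \<and>
      ((x < d i \<and> j = i + 1) \<or> (x > d i \<and> j = i + 2) \<or> (x = d i \<and> (j = i + 1 \<or> j = i + 2)))}"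

definition phi :: "(3 \<Rightarrow> real) \<Rightarrow> (3 \<Rightarrow> real) \<Rightarrow> pt \<Rightarrow> pt set" where
  "phi \<rho> d z = {f \<rho> j z | j. j \<in> rule d z}"

definition trajectory :: "(3 \<Rightarrow> real) \<Rightarrow> (3 \<Rightarrow> real) \<Rightarrow> (nat \<Rightarrow> pt) \<Rightarrow> bool" where
  "trajectory \<rho> d w \<longleftrightarrow> (\<forall>t. w (Suc t) \<in> phi \<rho> d (w t))"

definition preimage :: "(3 \<Rightarrow> real) \<Rightarrow> (3 \<Rightarrow> real) \<Rightarrow> pt \<Rightarrow> pt \<Rightarrow> bool" where
  "preimage \<rho> d z z' \<longleftrightarrow> (\<exists>w t. trajectory \<rho> d w \<and> w 0 = z \<and> t \<ge> 1 \<and> w t = z')"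

definition dpoint :: "(3 \<Rightarrow> real) \<Rightarrow> 3 \<Rightarrow> pt" where
  "dpoint d i = P i (d i)"

definition Pset :: "(3 \<Rightarrow> real) \<Rightarrow> (3 \<Rightarrow> real) \<Rightarrow> pt set" where
  "Pset \<rho> d = range (dpoint d) \<union> {z. \<exists>i. preimage \<rho> d z (dpoint d i)}"

definition dist1 :: "pt \<Rightarrow> pt \<Rightarrow> real" where
  "dist1 z z' = norm (z - z') / sqrt 2"

text \<open>Periodic orbit u_1,...,u_m (indices 1..m of u).\<close>
definition periodic_orbit :: "(3 \<Rightarrow> real) \<Rightarrow> (3 \<Rightarrow> real) \<Rightarrow> nat \<Rightarrow> (nat \<Rightarrow> pt) \<Rightarrow> bool" where
  "periodic_orbit \<rho> d m u \<longleftrightarrow> m \<ge> 1 \<and>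
     (\<forall>n\<in>{1..<m}. u (Suc n) \<in> phi \<rho> d (u n)) \<and> u 1 \<in> phi \<rho> d (u m)"

definition converges_onto :: "(nat \<Rightarrow> pt) \<Rightarrow> nat \<Rightarrow> (nat \<Rightarrow> pt) \<Rightarrow> bool" where
  "converges_onto w m u \<longleftrightarrow>
     (\<exists>n0. \<forall>n\<in>{1..m}. ((\<lambda>t. dist1 (w (m * t + n + n0)) (u n)) \<longlongrightarrow> 0) sequentially)"

definition Nbhd :: "real \<Rightarrow> 3 \<Rightarrow> real \<Rightarrow> pt set" where
  "Nbhd \<epsilon> i x = {z'. \<exists>x'. 0 \<le> x' \<and> x' \<le> 1 \<and> z' = P i x' \<and> \<bar>x' - x\<bar> < \<epsilon>}"

definition stable :: "(3 \<Rightarrow> real) \<Rightarrow> (3 \<Rightarrow> real) \<Rightarrow> nat \<Rightarrow> (nat \<Rightarrow> pt) \<Rightarrow> bool" where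
  "stable \<rho> d m u \<longleftrightarrow> (\<forall>n\<in>{1..m}. \<forall>i x. 0 \<le> x \<and> x \<le> 1 \<and> u n = P i x \<longrightarrow>
     (\<exists>\<epsilon>>0. \<forall>z'\<in>Nbhd \<epsilon> i x. \<forall>w. trajectory \<rho> d w \<and> w 0 = z' \<longrightarrow> converges_onto w m u))"

end

theory Submission
  imports Defs
begin

text \<open>
  Along an edge use the logit coordinate \<open>ln (x / (1 - x))\<close>. There each branch of the switching
  map has the form \<open>v \<mapsto> c \<plusminus> ln (a * exp (\<plusminus>v) + b)\<close> and is therefore a contraction with ratio
  \<open>< 1\<close> on its side of the decision point. Off \<open>\<P>\<close> the map is single-valued, and a segment of an
  edge that avoids \<open>\<P>\<close> is carried by a single branch onto a segment that again avoids \<open>\<P>\<close>: the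
  image is filled by the intermediate value theorem, and \<open>\<P>\<close> contains the pre-images of its
  points. Hence two trajectories starting in such a segment shadow each other with geometrically
  shrinking distance. This gives (ii), and (iii) follows by applying (ii) to the trajectory that
  runs around the orbit.

  For (i) let \<open>\<P>\<close> be finite. A trajectory either stays in \<open>\<P>\<close>, and then it is periodic,
  because every point has at most one predecessor; or it leaves \<open>\<P>\<close> for good. In the latter case
  the set of points of \<open>\<P>\<close> below the current point on its edge takes finitely many values, so
  at two times the trajectory lies in a common \<open>\<P>\<close>-free segment; the contraction then makes
  the trajectory converge onto the periodic orbit formed by the limits along the period. The
  same invariant determines an orbit avoiding \<open>\<P>\<close> from any one of its points, while an orbit
  meeting \<open>\<P>\<close> lies inside \<open>\<P>\<close>; so there are only finitely many orbits.
\<close>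

lemma ratio_mono:
  fixes s S c :: real
  assumes "0 < s" "s \<le> S" "0 < c"
  shows "s / (s + c) \<le> S / (S + c)"
  using assms by (simp add: divide_simps) (simp add: algebra_simps mult_right_mono)

lemma ln_affine_exp_lipschitz:
  fixes a c V v v' :: real
  assumes a: "0 < a" and c: "0 < c" and "v \<le> V" "v' \<le> V"
  shows "\<bar>ln (a * exp v + c) - ln (a * exp v' + c)\<bar> \<le> a * exp V / (a * exp V + c) * \<bar>v - v'\<bar>"
proof -
  define k where "k = a * exp V / (a * exp V + c)"
  have pos: "0 < a * exp t + c" for t using a c by (simp add: add_pos_pos)
  have lip: "\<bar>ln (a * exp t' + c) - ln (a * exp t + c)\<bar> \<le> k * (t' - t)"
    if "t < t'" "t' \<le> V" for t t'
  proof -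
    have "\<And>x. DERIV (\<lambda>x. ln (a * exp x + c)) x :> a * exp x / (a * exp x + c)"
      using pos by (auto intro!: derivative_eq_intros)
    then obtain z where z: "t < z" "z < t'"
      and mvt: "ln (a * exp t' + c) - ln (a * exp t + c) = (t' - t) * (a * exp z / (a * exp z + c))"
      using MVT2[OF \<open>t < t'\<close>, of "\<lambda>x. ln (a * exp x + c)" "\<lambda>x. a * exp x / (a * exp x + c)"] by blast
    define r where "r = a * exp z / (a * exp z + c)"
    have "0 \<le> r" unfolding r_def using a pos[of z] by simp
    moreover have "r \<le> k" unfolding r_def k_def using a c z that by (intro ratio_mono) auto
    ultimately show ?thesis
      unfolding mvt r_def[symmetric] using that by (simp add: abs_mult mult.commute mult_left_mono)
  qed
  show ?thesis
    using lip[of v v'] lip[of v' v] assms unfolding k_def[symmetric]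
    by (cases v v' rule: linorder_cases) (auto simp: abs_minus_commute)
qed

definition logit :: "real \<Rightarrow> real" where
  "logit x = ln x - ln (1 - x)"

definition logistic :: "real \<Rightarrow> real" where
  "logistic v = exp v / (1 + exp v)"

lemma logistic_bounds: "0 < logistic v" "logistic v < 1"
  unfolding logistic_def by (simp_all add: add_pos_pos)

lemma logistic_logit: "0 < x \<Longrightarrow> x < 1 \<Longrightarrow> logistic (logit x) = x"
  unfolding logistic_def logit_def by (simp add: exp_diff divide_simps)

lemma exp_logit: "0 < x \<Longrightarrow> x < 1 \<Longrightarrow> exp (logit x) = x / (1 - x)"
  unfolding logit_def by (simp add: exp_diff)

lemma logit_mono: "0 < x \<Longrightarrow> x \<le> y \<Longrightarrow> y < 1 \<Longrightarrow> logit x \<le> logit y"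
  unfolding logit_def by (smt (verit) ln_le_cancel_iff)

lemma tendsto_logistic [tendsto_intros]:
  "(g \<longlongrightarrow> a) F \<Longrightarrow> ((\<lambda>k. logistic (g k)) \<longlongrightarrow> logistic a) F"
  unfolding logistic_def by (rule tendsto_intros | assumption | smt (verit) exp_gt_zero)+

lemma abs_diff_le_abs_logit_diff:
  assumes "0 < x" "x < 1" "0 < y" "y < 1"
  shows "\<bar>x - y\<bar> \<le> \<bar>logit x - logit y\<bar>"
proof -
  have "y - x \<le> logit y - logit x" if "0 < x" "x \<le> y" "y < 1" for x y :: real
  proof -
    have "ln (x / y) \<le> x / y - 1" using that by (intro ln_le_minus_one) simp
    hence "(y - x) / y \<le> ln y - ln x" using that by (simp add: ln_div diff_divide_distrib)
    moreover have "y - x \<le> (y - x) / y" using that by (simp add: divide_simps mult_left_le)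
    moreover have "ln (1 - y) \<le> ln (1 - x)" using that by simp
    ultimately show ?thesis unfolding logit_def by linarith
  qed
  from this[of x y] this[of y x] show ?thesis using assms by (cases "x \<le> y") auto
qed

lemma IVT_between:
  fixes g :: "real \<Rightarrow> real"
  assumes "continuous_on {min a b..max a b} g" "q \<in> {min (g a) (g b)..max (g a) (g b)}"
  shows "\<exists>c\<in>{min a b..max a b}. g c = q"
  using IVT'[of g a q b] IVT2'[of g b q a] IVT'[of g b q a] IVT2'[of g a q b] assms
  by (cases "a \<le> b"; cases "g a \<le> g b") (auto simp: min_def max_def)

lemma convergent_if_geometric_increments:
  fixes a :: "nat \<Rightarrow> real"
  assumes "\<And>k. \<bar>a (Suc k) - a k\<bar> \<le> C * q ^ k" and "0 \<le> q" "q < 1"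
  shows "convergent a"
proof -
  have "summable (\<lambda>k. a (Suc k) - a k)"
    by (rule summable_comparison_test'[of "\<lambda>k. C * q ^ k"]) (use assms in \<open>auto intro: summable_mult summable_geometric\<close>)
  hence "convergent (\<lambda>n. \<Sum>k<n. a (Suc k) - a k)" by (simp add: summable_iff_convergent)
  hence "convergent (\<lambda>n. (a n - a 0) + a 0)" unfolding sum_lessThan_telescope by (intro convergent_add convergent_const)
  thus ?thesis by simp
qed

lemma periodic_multiple:
  fixes f :: "nat \<Rightarrow> 'a"
  assumes "\<And>t. f (t + p) = f t"
  shows "f (t + k * p) = f t"
proof (induction k)
  case (Suc k)
  have "t + Suc k * p = (t + k * p) + p" by simp
  thus ?case using assms Suc.IH by metis
qed simp

lemma pigeonhole_from:
  fixes g :: "nat \<Rightarrow> 'a"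
  assumes "finite (g ` {T..})"
  obtains t1 t2 where "T \<le> t1" "t1 < t2" "g t1 = g t2"
proof -
  have "\<not> inj_on g {T..}" using finite_imageD[OF assms] infinite_Ici[of T] by auto
  then obtain a b where ab: "a \<in> {T..}" "b \<in> {T..}" "a \<noteq> b" "g a = g b" unfolding inj_on_def by blast
  show thesis
  proof (rule that[of "min a b" "max a b"])
    show "g (min a b) = g (max a b)" using ab(4) by (simp add: min_def max_def)
  qed (use ab in auto)
qed

lemma numeral_3_reduce [simp]: "(4::3) = 1" "(5::3) = 2" "(6::3) = 3"
  by (simp_all add: eq_numeral_iff_iszero bit1.iszero_numeral)

lemma plus_3_simps:
  fixes i :: 3
  shows "i + 1 \<noteq> i" "i + 2 \<noteq> i" "i + 1 \<noteq> i + 2" "i \<noteq> i + 1" "i \<noteq> i + 2" "i + 2 \<noteq> i + 1"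
    "i + 1 + 1 = i + 2" "i + 1 + 2 = i" "i + 2 + 1 = i" "i + 2 + 2 = i + 1" "i + 3 = i"
  using exhaust_3[of i] by (elim disjE; simp)+

lemma plus_3_cancel:
  fixes s t :: 3
  shows "s + 1 = t + 1 \<longleftrightarrow> s = t" "s + 2 = t + 2 \<longleftrightarrow> s = t"
    "s + 1 = t + 2 \<longleftrightarrow> t = s + 2" "s + 2 = t + 1 \<longleftrightarrow> s = t + 2"
  using exhaust_3[of s] exhaust_3[of t] by (elim disjE; simp)+

lemma exhaust_3_from:
  fixes i k :: 3
  obtains "k = i" | "k = i + 1" | "k = i + 2"
  using exhaust_3[of i] exhaust_3[of k] by (elim disjE; simp)

lemma e_component: "e i $ k = (if k = i then 1 else 0)"
  by (simp add: e_def axis_def)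

lemma P_component: "P i x $ k = (if k = i + 1 then 1 - x else if k = i + 2 then x else 0)"
  by (auto simp: P_def e_component)

lemma f_component:
  "f \<rho> j z $ k = (if k = j then 0 else ((1 - \<rho> j) * z$k + \<rho> k * z$j) / ((1 - \<rho> j) + theta \<rho> * z$j))"
  unfolding f_def by (simp add: e_component if_distrib cong: if_cong)

lemma P_eq_iff:
  "P i x = P j y \<longleftrightarrow> (j = i \<and> y = x) \<or> (j = i + 2 \<and> x = 0 \<and> y = 1) \<or> (j = i + 1 \<and> x = 1 \<and> y = 0)"
  (is "_ \<longleftrightarrow> ?rhs")
proof
  assume "P i x = P j y"
  hence c: "\<And>k. P i x $ k = P j y $ k" by simp
  show ?rhs
  proof (cases rule: exhaust_3_from[of j i])
    case 1 thus ?thesis using c[of "i+2"] by (simp add: P_component)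
  next
    case 2 thus ?thesis using c[of i] c[of "i+1"] by (simp add: P_component)
  next
    case 3 thus ?thesis using c[of i] c[of "i+2"] by (simp add: P_component)
  qed
next
  show "?rhs \<Longrightarrow> P i x = P j y"
    by (elim disjE conjE) (simp_all add: vec_eq_iff P_component)
qed

lemma P_inject_interior: "P i x = P j y \<Longrightarrow> 0 < x \<Longrightarrow> x < 1 \<Longrightarrow> j = i \<and> y = x"
  by (auto simp: P_eq_iff)

lemma inj_P: "inj (P i)"
  by (rule injI) (simp add: P_eq_iff)

lemma dist1_P: "dist1 (P i x) (P i y) = \<bar>x - y\<bar>"
proof -
  have "norm (P i x - P i y) = sqrt ((x - y)\<^sup>2 + (y - x)\<^sup>2)" (is "?n = _")
    unfolding norm_vec_def L2_set_def sum_3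
    by (cases rule: exhaust_3_from[of 1 i]) (auto simp: P_component power2_eq_square algebra_simps)
  also have "\<dots> = sqrt 2 * \<bar>x - y\<bar>"
    by (simp add: power2_commute real_sqrt_mult)
  finally have n: "?n = sqrt 2 * \<bar>x - y\<bar>" .
  show ?thesis unfolding dist1_def n by simp
qed

lemma dist1_triangle: "dist1 a c \<le> dist1 a b + dist1 b c"
  unfolding dist1_def using norm_triangle_ineq[of "a - b" "b - c"]
  by (simp add: add_divide_distrib[symmetric] divide_right_mono)

lemma dist1_nonneg: "0 \<le> dist1 a b"
  unfolding dist1_def by simp

lemma dist_P: "dist (P i x) (P i y) = sqrt 2 * \<bar>x - y\<bar>"
  using dist1_P[of i x y] unfolding dist1_def dist_norm by (simp add: field_simps)

lemma converges_onto_asymptotic: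
  assumes "converges_onto w0 m u" and "(\<lambda>t. dist1 (w t) (w0 t)) \<longlonglongrightarrow> 0"
  shows "converges_onto w m u"
proof -
  obtain n0 where n0: "\<And>n. n \<in> {1..m} \<Longrightarrow> (\<lambda>t. dist1 (w0 (m * t + n + n0)) (u n)) \<longlonglongrightarrow> 0"
    using assms(1) unfolding converges_onto_def by blast
  have "(\<lambda>t. dist1 (w (m * t + n + n0)) (u n)) \<longlonglongrightarrow> 0" if n: "n \<in> {1..m}" for n
  proof (rule tendsto_sandwich[OF _ _ tendsto_const])
    have "strict_mono (\<lambda>t. m * t + n + n0)" using n by (intro strict_monoI) simp
    from LIMSEQ_subseq_LIMSEQ[OF assms(2) this]
    have "(\<lambda>t. dist1 (w (m * t + n + n0)) (w0 (m * t + n + n0))) \<longlonglongrightarrow> 0" by (simp add: o_def)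
    from tendsto_add_zero[OF this n0[OF n]]
    show "(\<lambda>t. dist1 (w (m * t + n + n0)) (w0 (m * t + n + n0)) + dist1 (w0 (m * t + n + n0)) (u n)) \<longlonglongrightarrow> 0" .
  qed (auto simp: dist1_nonneg dist1_triangle)
  thus ?thesis unfolding converges_onto_def by blast
qed

lemma converges_onto_shift:
  assumes "converges_onto (\<lambda>t. w (c + t)) m u"
  shows "converges_onto w m u"
proof -
  obtain n0 where "\<forall>n\<in>{1..m}. (\<lambda>t. dist1 (w (c + (m * t + n + n0))) (u n)) \<longlonglongrightarrow> 0"
    using assms unfolding converges_onto_def by blast
  hence "\<forall>n\<in>{1..m}. (\<lambda>t. dist1 (w (m * t + n + (n0 + c))) (u n)) \<longlonglongrightarrow> 0"
    by (simp add: algebra_simps)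
  thus ?thesis unfolding converges_onto_def by blast
qed

definition orbit_walk :: "nat \<Rightarrow> (nat \<Rightarrow> pt) \<Rightarrow> nat \<Rightarrow> nat \<Rightarrow> pt" where
  "orbit_walk m u n t = u ((n - 1 + t) mod m + 1)"

lemma orbit_walk_0: "1 \<le> n \<Longrightarrow> n \<le> m \<Longrightarrow> orbit_walk m u n 0 = u n"
  unfolding orbit_walk_def by simp

lemma orbit_walk_periodic: "orbit_walk m u n (t + m * k) = orbit_walk m u n t"
  unfolding orbit_walk_def by (simp add: add.assoc[symmetric])

lemma orbit_walk_index:
  assumes "1 \<le> n" "n \<le> m" "1 \<le> k" "k \<le> m"
  shows "orbit_walk m u n (k + m - n) = u k"
proof -
  have "(n - 1 + (k + m - n)) mod m = ((k - 1) + m) mod m" using assms by (simp add: algebra_simps)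
  also have "\<dots> = k - 1" using assms by (metis mod_add_self2 mod_less diff_less less_le_trans zero_less_one)
  finally show ?thesis unfolding orbit_walk_def using assms by simp
qed

lemma range_orbit_walk:
  assumes "1 \<le> n" "n \<le> m"
  shows "range (orbit_walk m u n) = u ` {1..m}"
proof
  show "range (orbit_walk m u n) \<subseteq> u ` {1..m}"
    unfolding orbit_walk_def using assms by (auto intro!: imageI simp: Suc_leI)
  show "u ` {1..m} \<subseteq> range (orbit_walk m u n)"
  proof
    fix y assume "y \<in> u ` {1..m}"
    then obtain k where "k \<in> {1..m}" "y = u k" by blast
    thus "y \<in> range (orbit_walk m u n)" using orbit_walk_index[OF assms, of k u] by (metis atLeastAtMost_iff rangeI)
  qed
qed

lemma converges_onto_orbit_walk:
  assumes "1 \<le> n" "n \<le> m"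
  shows "converges_onto (orbit_walk m u n) m u"
  unfolding converges_onto_def
proof (intro exI[of _ "m - n"] ballI)
  fix k assume k: "k \<in> {1..m}"
  have "orbit_walk m u n (m * t + k + (m - n)) = u k" for t
    using orbit_walk_periodic[of m u n "k + m - n" t] orbit_walk_index[OF assms, of k] k assms
    by (simp add: algebra_simps)
  thus "(\<lambda>t. dist1 (orbit_walk m u n (m * t + k + (m - n))) (u k)) \<longlonglongrightarrow> 0"
    by (simp add: dist1_def)
qed

section \<open>The two branches of the switching map\<close>

locale triangle_process =
  fixes \<rho> d :: "3 \<Rightarrow> real"
  assumes rho: "\<forall>i. 0 < \<rho> i \<and> \<rho> i < 1"
    and heavy: "\<rho> 1 + \<rho> 2 + \<rho> 3 > 1"
    and dec: "\<forall>i. 0 < d i \<and> d i < 1"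
begin

lemma rho_bounds: "0 < \<rho> i" "\<rho> i < 1"
  using rho by auto

lemma d_bounds: "0 < d i" "d i < 1"
  using dec by auto

lemma theta_pos: "0 < theta \<rho>"
  using heavy by (simp add: theta_def)

lemma theta_eq: "theta \<rho> = \<rho> i + \<rho> (i+1) + \<rho> (i+2) - 1"
  using exhaust_3[of i] by (auto simp: theta_def)

definition left_map :: "3 \<Rightarrow> real \<Rightarrow> real" where
  "left_map i x = \<rho> i * (1 - x) / ((1 - \<rho> (i+1)) + theta \<rho> * (1 - x))"

definition right_map :: "3 \<Rightarrow> real \<Rightarrow> real" where
  "right_map i x = ((1 - \<rho> (i+2)) * (1 - x) + \<rho> (i+1) * x) / ((1 - \<rho> (i+2)) + theta \<rho> * x)"

lemma left_denom_pos:
  assumes "x \<le> 1"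
  shows "0 < (1 - \<rho> (i+1)) + theta \<rho> * (1 - x)"
proof -
  have "0 \<le> theta \<rho> * (1 - x)" using assms theta_pos by simp
  thus ?thesis using rho_bounds[of "i+1"] by linarith
qed

lemma right_denom_pos:
  assumes "0 \<le> x"
  shows "0 < (1 - \<rho> (i+2)) + theta \<rho> * x"
proof -
  have "0 \<le> theta \<rho> * x" using assms theta_pos by simp
  thus ?thesis using rho_bounds[of "i+2"] by linarith
qed

lemma f_left:
  assumes "x \<le> 1"
  shows "f \<rho> (i+1) (P i x) = P (i+1) (left_map i x)"
proof -
  have "f \<rho> (i+1) (P i x) $ k = P (i+1) (left_map i x) $ k" for k
    using left_denom_pos[OF assms, of i] by (cases rule: exhaust_3_from[of i k]; hypsubst)
      (simp_all add: f_component P_component left_map_def theta_eq[of i] plus_3_simps field_simps)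
  thus ?thesis by (simp add: vec_eq_iff)
qed

lemma f_right:
  assumes "0 \<le> x"
  shows "f \<rho> (i+2) (P i x) = P (i+2) (right_map i x)"
proof -
  have "f \<rho> (i+2) (P i x) $ k = P (i+2) (right_map i x) $ k" for k
    using right_denom_pos[OF assms, of i] by (cases rule: exhaust_3_from[of i k]; hypsubst)
      (simp_all add: f_component P_component right_map_def theta_eq[of i] plus_3_simps field_simps)
  thus ?thesis by (simp add: vec_eq_iff)
qed

lemma rule_P:
  assumes "0 \<le> x" "x \<le> 1"
  shows "rule d (P i x) = (if x < d i then {i+1} else if d i < x then {i+2} else {i+1, i+2})"
proof (rule set_eqI)
  fix j
  have "j \<in> rule d (P i x) \<longleftrightarrow> (x < d i \<and> j = i + 1) \<or> (x > d i \<and> j = i + 2) \<or> (x = d i \<and> (j = i + 1 \<or> j = i + 2))"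
  proof
    assume "j \<in> rule d (P i x)"
    then obtain i' x' where "P i x = P i' x'"
      and "(x' < d i' \<and> j = i' + 1) \<or> (x' > d i' \<and> j = i' + 2) \<or> (x' = d i' \<and> (j = i' + 1 \<or> j = i' + 2))"
      unfolding rule_def by blast
    thus "(x < d i \<and> j = i + 1) \<or> (x > d i \<and> j = i + 2) \<or> (x = d i \<and> (j = i + 1 \<or> j = i + 2))"
      using d_bounds[of i] d_bounds[of "i+1"] d_bounds[of "i+2"] plus_3_simps[of i]
      unfolding P_eq_iff by auto
  qed (use assms in \<open>auto simp: rule_def\<close>)
  thus "j \<in> rule d (P i x) \<longleftrightarrow> j \<in> (if x < d i then {i+1} else if d i < x then {i+2} else {i+1, i+2})"
    by auto
qed

lemma phi_P:
  assumes "0 \<le> x" "x \<le> 1"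
  shows "phi \<rho> d (P i x) = (if x < d i then {P (i+1) (left_map i x)}
     else if d i < x then {P (i+2) (right_map i x)}
     else {P (i+1) (left_map i x), P (i+2) (right_map i x)})"
  unfolding phi_def rule_P[OF assms] using f_left[OF assms(2), of i] f_right[OF assms(1), of i]
  by (auto, metis+)

lemma left_map_interior:
  assumes "0 \<le> x" "x < 1"
  shows "0 < left_map i x" "left_map i x < 1"
proof -
  have "0 < (1 - \<rho> (i+1)) * x + \<rho> (i+2) * (1 - x)"
    using assms rho_bounds[of "i+1"] rho_bounds[of "i+2"] by (smt (verit) mult_nonneg_nonneg mult_pos_pos)
  hence "\<rho> i * (1 - x) < (1 - \<rho> (i+1)) + theta \<rho> * (1 - x)"
    unfolding theta_eq[of i] by (simp add: algebra_simps)
  moreover have "0 < \<rho> i * (1 - x)" using assms rho_bounds[of i] by simp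
  ultimately show "0 < left_map i x" "left_map i x < 1"
    using left_denom_pos[of x i] assms by (simp_all add: left_map_def divide_simps)
qed

lemma right_map_interior:
  assumes "0 < x" "x \<le> 1"
  shows "0 < right_map i x" "right_map i x < 1"
proof -
  have num: "0 < (1 - \<rho> (i+2)) * (1 - x) + \<rho> (i+1) * x"
    using assms rho_bounds[of "i+1"] rho_bounds[of "i+2"] by (smt (verit) mult_nonneg_nonneg mult_pos_pos)
  have "0 < \<rho> i * x" using assms rho_bounds[of i] by simp
  hence "(1 - \<rho> (i+2)) * (1 - x) + \<rho> (i+1) * x < (1 - \<rho> (i+2)) + theta \<rho> * x"
    unfolding theta_eq[of i] by (simp add: algebra_simps)
  thus "0 < right_map i x" "right_map i x < 1"
    using num right_denom_pos[of x i] assms by (simp_all add: right_map_def divide_simps)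
qed

lemma continuous_on_left_map: "continuous_on {0..1} (left_map i)"
  unfolding left_map_def by (intro continuous_intros) (metis atLeastAtMost_iff left_denom_pos less_irrefl)

lemma continuous_on_right_map: "continuous_on {0..1} (right_map i)"
  unfolding right_map_def by (intro continuous_intros) (metis atLeastAtMost_iff right_denom_pos less_irrefl)

lemma left_map_inject:
  assumes "x \<le> 1" "x' \<le> 1" "left_map i x = left_map i x'"
  shows "x = x'"
proof -
  have "\<rho> i * (1 - x) * ((1 - \<rho> (i+1)) + theta \<rho> * (1 - x'))
      = \<rho> i * (1 - x') * ((1 - \<rho> (i+1)) + theta \<rho> * (1 - x))"
    using assms left_denom_pos[of x i] left_denom_pos[of x' i] unfolding left_map_def by (simp add: divide_simps)
  hence "(\<rho> i * (1 - \<rho> (i+1))) * (x' - x) = 0" by (simp add: algebra_simps)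
  thus ?thesis using rho_bounds[of i] rho_bounds[of "i+1"] by simp
qed

lemma right_map_inject:
  assumes "0 \<le> x" "0 \<le> x'" "right_map i x = right_map i x'"
  shows "x = x'"
proof -
  have "((1 - \<rho> (i+2)) * (1 - x) + \<rho> (i+1) * x) * ((1 - \<rho> (i+2)) + theta \<rho> * x')
      = ((1 - \<rho> (i+2)) * (1 - x') + \<rho> (i+1) * x') * ((1 - \<rho> (i+2)) + theta \<rho> * x)"
    using assms right_denom_pos[of x i] right_denom_pos[of x' i] unfolding right_map_def by (simp add: divide_simps)
  hence "(\<rho> i * (1 - \<rho> (i+2))) * (x' - x) = 0" unfolding theta_eq[of i] by (simp add: algebra_simps)
  thus ?thesis using rho_bounds[of i] rho_bounds[of "i+2"] by simp
qed

text \<open>Both branches land on edge \<open>s+1\<close>: the left branch from edge \<open>s\<close> below the threshold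
  \<open>\<rho> s / (\<rho> s + \<rho> (s+2))\<close>, the right branch from edge \<open>s+2\<close> above it.\<close>

lemma left_map_below_threshold:
  assumes "0 \<le> x" "x \<le> 1"
  shows "\<rho> s - left_map s x * (\<rho> s + \<rho> (s+2)) = \<rho> s * (1 - \<rho> (s+1)) * x / ((1 - \<rho> (s+1)) + theta \<rho> * (1 - x))"
  using left_denom_pos[OF assms(2), of s] unfolding left_map_def theta_eq[of s]
  by (simp add: divide_simps) (simp add: algebra_simps)

lemma right_map_above_threshold:
  assumes "0 \<le> x" "x \<le> 1"
  shows "right_map (s+2) x * (\<rho> s + \<rho> (s+2)) - \<rho> s = (1 - \<rho> (s+1)) * \<rho> (s+2) * (1 - x) / ((1 - \<rho> (s+1)) + theta \<rho> * x)"
  using right_denom_pos[OF assms(1), of "s+2"] unfolding right_map_def theta_eq[of s] plus_3_simps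
  by (simp add: divide_simps) (simp add: algebra_simps)

lemma left_map_eq_right_map_imp_vertices:
  assumes "0 \<le> x" "x \<le> 1" "0 \<le> x'" "x' \<le> 1" "left_map s x = right_map (s+2) x'"
  shows "x = 0 \<and> x' = 1"
proof -
  let ?a = "\<rho> s * (1 - \<rho> (s+1)) * x / ((1 - \<rho> (s+1)) + theta \<rho> * (1 - x))"
  let ?b = "(1 - \<rho> (s+1)) * \<rho> (s+2) * (1 - x') / ((1 - \<rho> (s+1)) + theta \<rho> * x')"
  have pos: "0 < 1 - \<rho> (s+1)" "0 < \<rho> s" "0 < \<rho> (s+2)" using rho_bounds by auto
  have D: "0 < (1 - \<rho> (s+1)) + theta \<rho> * (1 - x)" "0 < (1 - \<rho> (s+1)) + theta \<rho> * x'"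
    using left_denom_pos[of x s] right_denom_pos[of x' "s+2"] assms by (auto simp: plus_3_simps)
  have "0 \<le> ?a" "0 \<le> ?b" using D pos assms by simp_all
  moreover have "?a + ?b = 0"
  proof -
    have "left_map s x * (\<rho> s + \<rho> (s+2)) = right_map (s+2) x' * (\<rho> s + \<rho> (s+2))"
      using assms(5) by simp
    thus ?thesis
      using left_map_below_threshold[OF assms(1,2), of s] right_map_above_threshold[OF assms(3,4), of s]
      by linarith
  qed
  ultimately have "?a = 0" "?b = 0" by linarith+
  thus ?thesis using D pos by simp
qed

lemma phi_domain: "y \<in> phi \<rho> d z \<Longrightarrow> \<exists>i x. 0 \<le> x \<and> x \<le> 1 \<and> z = P i x"
  unfolding phi_def rule_def by blast

lemma phi_P_domain:
  assumes "y \<in> phi \<rho> d (P i x)"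
  shows "0 \<le> x" "x \<le> 1"
proof -
  obtain i' x' where "0 \<le> x'" "x' \<le> 1" "P i x = P i' x'" using phi_domain[OF assms] by blast
  thus "0 \<le> x" "x \<le> 1" unfolding P_eq_iff by auto
qed

lemma phi_P_cases [consumes 1, case_names left right]:
  assumes "y \<in> phi \<rho> d (P i x)"
  obtains "x \<le> d i" "y = P (i+1) (left_map i x)" "0 < left_map i x" "left_map i x < 1"
    | "d i \<le> x" "y = P (i+2) (right_map i x)" "0 < right_map i x" "right_map i x < 1"
proof -
  note x = phi_P_domain[OF assms]
  have "(x \<le> d i \<and> y = P (i+1) (left_map i x)) \<or> (d i \<le> x \<and> y = P (i+2) (right_map i x))"
    using assms unfolding phi_P[OF x] by (auto split: if_splits)
  thus thesis
    using that left_map_interior[of x i] right_map_interior[of x i] x d_bounds[of i] by force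
qed

lemma phi_interior:
  assumes "y \<in> phi \<rho> d z"
  obtains j v where "0 < v" "v < 1" "y = P j v"
proof -
  obtain i x where "z = P i x" using phi_domain[OF assms] by blast
  with assms have "y \<in> phi \<rho> d (P i x)" by simp
  thus thesis by (cases rule: phi_P_cases) (auto intro: that)
qed

lemma phi_nonempty:
  assumes "0 \<le> x" "x \<le> 1"
  shows "phi \<rho> d (P i x) \<noteq> {}"
  unfolding phi_P[OF assms] by simp

lemma phi_singleton_off_decision:
  assumes "0 \<le> x" "x \<le> 1" "x \<noteq> d i"
  shows "\<exists>y. phi \<rho> d (P i x) = {y}"
  unfolding phi_P[OF assms(1,2)] using assms(3) by auto

lemma phi_decision_not_singleton: "phi \<rho> d (P i (d i)) \<noteq> {z}"
proof
  let ?L = "P (i+1) (left_map i (d i))" and ?R = "P (i+2) (right_map i (d i))"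
  assume "phi \<rho> d (P i (d i)) = {z}"
  hence "{?L, ?R} = {z}" using phi_P[of "d i" i] d_bounds[of i] by simp
  hence "?L = z" "?R = z" by blast+
  hence "?L = ?R" by simp
  moreover have "0 < left_map i (d i)" "left_map i (d i) < 1"
    using left_map_interior[of "d i" i] d_bounds[of i] by auto
  ultimately show False using P_inject_interior plus_3_simps(3)[of i] by metis
qed

lemma phi_singleton_cases:
  assumes "0 \<le> x" "x \<le> 1" "phi \<rho> d (P i x) = {P j y}"
  shows "(x < d i \<and> j = i+1 \<and> y = left_map i x) \<or> (d i < x \<and> j = i+2 \<and> y = right_map i x)"
proof -
  have x: "x \<noteq> d i" using assms(3) phi_decision_not_singleton by blast
  have "P j y \<in> phi \<rho> d (P i x)" using assms(3) by simp
  thus ?thesis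
  proof (cases rule: phi_P_cases)
    case left
    hence "P (i+1) (left_map i x) = P j y" "0 < left_map i x" "left_map i x < 1" "x < d i"
      using x by auto
    thus ?thesis using P_inject_interior by blast
  next
    case right
    hence "P (i+2) (right_map i x) = P j y" "0 < right_map i x" "right_map i x < 1" "d i < x"
      using x by auto
    thus ?thesis using P_inject_interior by blast
  qed
qed

lemma left_right_image_eq:
  assumes "0 \<le> x" "x \<le> 1" "0 \<le> x'" "x' \<le> 1" "0 < left_map s x" "left_map s x < 1"
    and "P (s+1) (left_map s x) = P (t+2) (right_map t x')"
  shows "P s x = P t x'"
proof -
  have "t + 2 = s + 1" and eq: "right_map t x' = left_map s x"
    using P_inject_interior[OF assms(7,5,6)] by auto
  hence t: "t = s + 2" by (simp add: plus_3_cancel)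
  have "x = 0 \<and> x' = 1" using left_map_eq_right_map_imp_vertices[OF assms(1-4), of s] eq unfolding t by simp
  thus ?thesis using t P_eq_iff by auto
qed

lemma phi_predecessor_unique:
  assumes a: "y \<in> phi \<rho> d a" and b: "y \<in> phi \<rho> d b"
  shows "a = b"
proof -
  obtain s x where sx: "0 \<le> x" "x \<le> 1" "a = P s x" using phi_domain[OF a] by blast
  obtain t x' where tx: "0 \<le> x'" "x' \<le> 1" "b = P t x'" using phi_domain[OF b] by blast
  from a[unfolded sx(3)] show ?thesis
  proof (cases rule: phi_P_cases)
    case L: left
    from b[unfolded tx(3)] show ?thesis
    proof (cases rule: phi_P_cases)
      case left
      hence "t = s" "left_map s x' = left_map s x"
        using L P_inject_interior[of "s+1" "left_map s x" "t+1"] by (auto simp: plus_3_cancel)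
      thus ?thesis using sx tx left_map_inject by auto
    next
      case right thus ?thesis using L sx tx left_right_image_eq by auto
    qed
  next
    case R: right
    from b[unfolded tx(3)] show ?thesis
    proof (cases rule: phi_P_cases)
      case left thus ?thesis using R sx tx left_right_image_eq by (metis (no_types))
    next
      case right
      hence "t = s" "right_map s x' = right_map s x"
        using R P_inject_interior[of "s+2" "right_map s x" "t+2"] by (auto simp: plus_3_cancel)
      thus ?thesis using sx tx right_map_inject by auto
    qed
  qed
qed

lemma trajectory_exists:
  assumes "0 \<le> x" "x \<le> 1"
  shows "\<exists>w. trajectory \<rho> d w \<and> w 0 = P i x"
proof -
  let ?edge = "\<lambda>z. \<exists>i x. 0 \<le> x \<and> x \<le> 1 \<and> z = P i x"
  have "\<exists>w. \<forall>n. (?edge (w n) \<and> (n = 0 \<longrightarrow> w n = P i x)) \<and> w (Suc n) \<in> phi \<rho> d (w n)"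
  proof (rule dependent_nat_choice)
    fix z and n :: nat assume "?edge z \<and> (n = 0 \<longrightarrow> z = P i x)"
    then obtain y where "y \<in> phi \<rho> d z" using phi_nonempty by blast
    moreover from this obtain j v where "0 < v" "v < 1" "y = P j v" by (rule phi_interior)
    ultimately show "\<exists>y. (?edge y \<and> (Suc n = 0 \<longrightarrow> y = P i x)) \<and> y \<in> phi \<rho> d z"
      by (intro exI[of _ y]) (auto intro: less_imp_le)
  qed (use assms in blast)
  thus ?thesis unfolding trajectory_def by blast
qed

lemma trajectory_Cons:
  "y \<in> phi \<rho> d z \<Longrightarrow> trajectory \<rho> d w \<Longrightarrow> w 0 = y \<Longrightarrow> trajectory \<rho> d (case_nat z w)"
  unfolding trajectory_def by (auto split: nat.split)

lemma trajectory_shift: "trajectory \<rho> d w \<Longrightarrow> trajectory \<rho> d (\<lambda>t. w (c + t))"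
  unfolding trajectory_def by simp

lemma trajectory_interior:
  assumes "trajectory \<rho> d w" "0 < t"
  obtains i x where "0 < x" "x < 1" "w t = P i x"
proof -
  obtain t' where "t = Suc t'" using assms(2) gr0_implies_Suc by blast
  thus thesis using assms(1) that phi_interior unfolding trajectory_def by metis
qed

lemma trajectory_on_edges:
  assumes "trajectory \<rho> d w"
  obtains i x where "0 \<le> x" "x \<le> 1" "w t = P i x"
  using assms phi_domain that unfolding trajectory_def by blast

lemma decision_point_in_Pset: "P i (d i) \<in> Pset \<rho> d"
  unfolding Pset_def dpoint_def by auto

lemma Pset_reached:
  assumes "z \<in> Pset \<rho> d" "z = P i x" "0 \<le> x" "x \<le> 1"
  obtains w t k where "trajectory \<rho> d w" "w 0 = z" "w t = dpoint d k"
proof (cases "\<exists>k. z = dpoint d k")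
  case True
  then obtain k where "z = dpoint d k" by blast
  moreover obtain w where "trajectory \<rho> d w" "w 0 = z" using trajectory_exists assms(2-4) by blast
  ultimately show thesis using that[of w 0 k] by simp
next
  case False
  thus thesis using assms(1) that unfolding Pset_def preimage_def by blast
qed

lemma Pset_backward_closed:
  assumes "y \<in> phi \<rho> d z" "y \<in> Pset \<rho> d"
  shows "z \<in> Pset \<rho> d"
proof -
  obtain j v where "0 < v" "v < 1" "y = P j v" using assms(1) by (rule phi_interior)
  then obtain w t k where w: "trajectory \<rho> d w" "w 0 = y" "w t = dpoint d k"
    using Pset_reached assms(2) by (metis less_eq_real_def)
  have "trajectory \<rho> d (case_nat z w)" using trajectory_Cons[OF assms(1) w(1,2)] .
  hence "preimage \<rho> d z (dpoint d k)"
    unfolding preimage_def using w(3) by (intro exI[of _ "case_nat z w"] exI[of _ "Suc t"]) simp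
  thus ?thesis unfolding Pset_def by blast
qed

lemma trajectory_Pset_before:
  assumes "trajectory \<rho> d w" "w t \<in> Pset \<rho> d" "t' \<le> t"
  shows "w t' \<in> Pset \<rho> d"
  using assms(3,2)
proof (induction t' rule: inc_induct)
  case (step n)
  thus ?case using Pset_backward_closed assms(1) unfolding trajectory_def by blast
qed

lemma trajectory_unique_off_Pset:
  assumes w: "trajectory \<rho> d w" and w': "trajectory \<rho> d w'" and "w' 0 = w 0" "w 0 \<notin> Pset \<rho> d"
  shows "w' = w"
proof
  fix t show "w' t = w t"
  proof (induction t)
    case (Suc t)
    obtain s x where sx: "0 \<le> x" "x \<le> 1" "w t = P s x" using w by (rule trajectory_on_edges)
    have "w t \<notin> Pset \<rho> d" using trajectory_Pset_before[OF w, of t 0] assms(4) by auto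
    hence "x \<noteq> d s" using sx(3) decision_point_in_Pset by auto
    then obtain y where y: "phi \<rho> d (w t) = {y}"
      using phi_singleton_off_decision[OF sx(1,2)] unfolding sx(3) by blast
    have "w (Suc t) \<in> phi \<rho> d (w t)" "w' (Suc t) \<in> phi \<rho> d (w t)"
      using w w' Suc.IH unfolding trajectory_def by metis+
    thus ?case unfolding y by simp
  qed (use assms in simp)
qed

section \<open>Contraction in the logit coordinate\<close>

lemma logit_left_map:
  assumes "0 < x" "x < 1"
  shows "logit (left_map i x) = ln (\<rho> i) - ln ((1 - \<rho> (i+1)) * exp (logit x) + \<rho> (i+2))"
proof -
  define D where "D = (1 - \<rho> (i+1)) + theta \<rho> * (1 - x)"
  define M where "M = (1 - \<rho> (i+1)) * x + \<rho> (i+2) * (1 - x)"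
  have pos: "0 < D" "0 < M" "0 < \<rho> i * (1 - x)"
    unfolding D_def M_def using left_denom_pos[of x i] assms rho_bounds[of i] rho_bounds[of "i+1"] rho_bounds[of "i+2"]
    by (auto intro!: add_pos_pos)
  have "left_map i x = \<rho> i * (1 - x) / D" "1 - left_map i x = M / D"
    unfolding left_map_def D_def M_def theta_eq[of i] using pos(1) unfolding D_def theta_eq[of i]
    by (simp_all add: divide_simps) (simp add: algebra_simps)
  hence "logit (left_map i x) = ln (\<rho> i * (1 - x)) - ln M"
    unfolding logit_def using pos assms rho_bounds[of i] by (simp add: ln_div)
  also have "\<dots> = ln (\<rho> i) - ln (M / (1 - x))"
    using pos assms rho_bounds[of i] by (simp add: ln_div ln_mult)
  also have "M / (1 - x) = (1 - \<rho> (i+1)) * exp (logit x) + \<rho> (i+2)"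
    unfolding exp_logit[OF assms] M_def using assms by (simp add: field_simps)
  finally show ?thesis .
qed

lemma logit_right_map:
  assumes "0 < x" "x < 1"
  shows "logit (right_map i x) = ln ((1 - \<rho> (i+2)) * exp (- logit x) + \<rho> (i+1)) - ln (\<rho> i)"
proof -
  define D where "D = (1 - \<rho> (i+2)) + theta \<rho> * x"
  define N where "N = (1 - \<rho> (i+2)) * (1 - x) + \<rho> (i+1) * x"
  have pos: "0 < D" "0 < N" "0 < \<rho> i * x"
    unfolding D_def N_def using right_denom_pos[of x i] assms rho_bounds[of i] rho_bounds[of "i+1"] rho_bounds[of "i+2"]
    by (auto intro!: add_pos_pos)
  have "right_map i x = N / D" "1 - right_map i x = \<rho> i * x / D"
    unfolding right_map_def D_def N_def using pos(1) unfolding D_def theta_eq[of i]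
    by (simp_all add: divide_simps) (simp add: algebra_simps)
  hence "logit (right_map i x) = ln N - ln (\<rho> i * x)"
    unfolding logit_def using pos assms rho_bounds[of i] by (simp add: ln_div)
  also have "\<dots> = ln (N / x) - ln (\<rho> i)"
    using pos assms rho_bounds[of i] by (simp add: ln_div ln_mult)
  also have "N / x = (1 - \<rho> (i+2)) * exp (- logit x) + \<rho> (i+1)"
    unfolding exp_minus exp_logit[OF assms] N_def using assms by (simp add: field_simps)
  finally show ?thesis .
qed

text \<open>The Lipschitz constants that \<open>ln_affine_exp_lipschitz\<close> gives for the two branches in the
  logit coordinate, with \<open>V = \<plusminus>logit (d i)\<close>.\<close>

definition left_rate :: "3 \<Rightarrow> real" where
  "left_rate i = (1 - \<rho> (i+1)) * exp (logit (d i)) / ((1 - \<rho> (i+1)) * exp (logit (d i)) + \<rho> (i+2))"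

definition right_rate :: "3 \<Rightarrow> real" where
  "right_rate i = (1 - \<rho> (i+2)) * exp (- logit (d i)) / ((1 - \<rho> (i+2)) * exp (- logit (d i)) + \<rho> (i+1))"

definition contraction_rate :: real where
  "contraction_rate = Max (range left_rate \<union> range right_rate)"

lemma contraction_rate_bounds:
  "left_rate i \<le> contraction_rate" "right_rate i \<le> contraction_rate"
  "0 \<le> contraction_rate" "contraction_rate < 1"
proof -
  have rates: "0 \<le> left_rate j" "left_rate j < 1" "right_rate j < 1" for j
    using rho_bounds[of "j+1"] rho_bounds[of "j+2"]
    unfolding left_rate_def right_rate_def by (simp_all add: divide_simps add_pos_pos)
  have fin: "finite (range left_rate \<union> range right_rate)" by simp
  show le: "left_rate i \<le> contraction_rate" "right_rate i \<le> contraction_rate"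
    unfolding contraction_rate_def by (rule Max_ge[OF fin]; simp)+
  show "0 \<le> contraction_rate" using le(1) rates(1)[of i] by linarith
  show "contraction_rate < 1" unfolding contraction_rate_def using fin rates by (subst Max_less_iff) auto
qed

lemma logit_left_map_lipschitz:
  assumes "0 < x" "x \<le> d i" "0 < x'" "x' \<le> d i"
  shows "\<bar>logit (left_map i x) - logit (left_map i x')\<bar> \<le> contraction_rate * \<bar>logit x - logit x'\<bar>"
proof -
  have "x < 1" "x' < 1" using assms d_bounds[of i] by auto
  hence "\<bar>logit (left_map i x) - logit (left_map i x')\<bar> =
     \<bar>ln ((1 - \<rho> (i+1)) * exp (logit x) + \<rho> (i+2)) - ln ((1 - \<rho> (i+1)) * exp (logit x') + \<rho> (i+2))\<bar>"
    using assms by (simp add: logit_left_map abs_minus_commute)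
  also have "\<dots> \<le> left_rate i * \<bar>logit x - logit x'\<bar>" unfolding left_rate_def
    by (rule ln_affine_exp_lipschitz) (use rho_bounds logit_mono d_bounds[of i] assms in auto)
  also have "\<dots> \<le> contraction_rate * \<bar>logit x - logit x'\<bar>"
    using contraction_rate_bounds(1) by (rule mult_right_mono) simp
  finally show ?thesis .
qed

lemma logit_right_map_lipschitz:
  assumes "d i \<le> x" "x < 1" "d i \<le> x'" "x' < 1"
  shows "\<bar>logit (right_map i x) - logit (right_map i x')\<bar> \<le> contraction_rate * \<bar>logit x - logit x'\<bar>"
proof -
  have "0 < x" "0 < x'" using assms d_bounds[of i] by auto
  hence "\<bar>logit (right_map i x) - logit (right_map i x')\<bar> =
     \<bar>ln ((1 - \<rho> (i+2)) * exp (- logit x) + \<rho> (i+1)) - ln ((1 - \<rho> (i+2)) * exp (- logit x') + \<rho> (i+1))\<bar>"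
    using assms by (simp add: logit_right_map)
  also have "\<dots> \<le> right_rate i * \<bar>(- logit x) - (- logit x')\<bar>" unfolding right_rate_def
    by (rule ln_affine_exp_lipschitz) (use rho_bounds logit_mono d_bounds[of i] assms \<open>0 < x\<close> \<open>0 < x'\<close> in auto)
  also have "\<dots> \<le> contraction_rate * \<bar>logit x - logit x'\<bar>"
    using contraction_rate_bounds(2) by (simp add: abs_minus_commute mult_right_mono)
  finally show ?thesis .
qed

lemma logit_phi_contraction:
  assumes "0 < x" "x < 1" "0 < x'" "x' < 1"
    and "phi \<rho> d (P s x) = {P s' y}" "phi \<rho> d (P s x') = {P s' y'}"
  shows "\<bar>logit y - logit y'\<bar> \<le> contraction_rate * \<bar>logit x - logit x'\<bar>"
  using phi_singleton_cases[OF _ _ assms(5)] phi_singleton_cases[OF _ _ assms(6)] assms(1-4)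
    logit_left_map_lipschitz[of x s x'] logit_right_map_lipschitz[of s x x'] plus_3_simps(3)[of s]
  by auto

section \<open>Segments avoiding the pre-image set\<close>

definition free_segment :: "3 \<Rightarrow> real \<Rightarrow> real \<Rightarrow> bool" where
  "free_segment s x x' \<longleftrightarrow> 0 \<le> x \<and> x \<le> 1 \<and> 0 \<le> x' \<and> x' \<le> 1 \<and>
     (\<forall>q\<in>{min x x'..max x x'}. P s q \<notin> Pset \<rho> d)"

lemma free_segment_commute: "free_segment s x x' \<longleftrightarrow> free_segment s x' x"
  unfolding free_segment_def by (auto simp: min.commute max.commute)

lemma free_segment_image:
  assumes free: "free_segment s x x'" and g: "continuous_on {0..1} g"
    and step: "\<And>c. c \<in> {min x x'..max x x'} \<Longrightarrow> P s' (g c) \<in> phi \<rho> d (P s c)"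
    and "0 \<le> g x" "g x \<le> 1" "0 \<le> g x'" "g x' \<le> 1"
  shows "free_segment s' (g x) (g x')"
  unfolding free_segment_def
proof (intro conjI ballI)
  fix q assume q: "q \<in> {min (g x) (g x')..max (g x) (g x')}"
  have sub: "{min x x'..max x x'} \<subseteq> {0..1}" using free unfolding free_segment_def by auto
  obtain c where "c \<in> {min x x'..max x x'}" "g c = q"
    using IVT_between[OF continuous_on_subset[OF g sub] q] by blast
  moreover have "P s c \<notin> Pset \<rho> d" if "c \<in> {min x x'..max x x'}" for c
    using free that unfolding free_segment_def by blast
  ultimately show "P s' q \<notin> Pset \<rho> d" using step Pset_backward_closed by blast
qed (use assms in auto)

lemma free_segment_step:
  assumes free: "free_segment s x x'"
  obtains s' y y' where "free_segment s' y y'" "phi \<rho> d (P s x) = {P s' y}" "phi \<rho> d (P s x') = {P s' y'}"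
    "0 < y" "y < 1" "0 < y'" "y' < 1"
proof -
  have range: "{min x x'..max x x'} \<subseteq> {0..1}" using free unfolding free_segment_def by auto
  have "d s \<notin> {min x x'..max x x'}" using free decision_point_in_Pset unfolding free_segment_def by blast
  hence "max x x' < d s \<or> d s < min x x'" by auto
  thus thesis
  proof
    assume below: "max x x' < d s"
    have step: "P (s+1) (left_map s c) \<in> phi \<rho> d (P s c)" if "c \<in> {min x x'..max x x'}" for c
      using that range below phi_P[of c s] by auto
    have "0 < left_map s x" "left_map s x < 1" "0 < left_map s x'" "left_map s x' < 1"
      using left_map_interior free below d_bounds[of s] unfolding free_segment_def by auto
    moreover have "free_segment (s+1) (left_map s x) (left_map s x')"
      by (rule free_segment_image[OF free continuous_on_left_map step]) (use calculation in auto)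
    ultimately show thesis using that phi_P free below unfolding free_segment_def by auto
  next
    assume above: "d s < min x x'"
    have step: "P (s+2) (right_map s c) \<in> phi \<rho> d (P s c)" if "c \<in> {min x x'..max x x'}" for c
      using that range above phi_P[of c s] by auto
    have "0 < right_map s x" "right_map s x < 1" "0 < right_map s x'" "right_map s x' < 1"
      using right_map_interior free above d_bounds[of s] unfolding free_segment_def by auto
    moreover have "free_segment (s+2) (right_map s x) (right_map s x')"
      by (rule free_segment_image[OF free continuous_on_right_map step]) (use calculation in auto)
    ultimately show thesis using that phi_P free above unfolding free_segment_def by auto
  qed
qed

definition parallel_chain :: "(nat \<Rightarrow> 3) \<Rightarrow> (nat \<Rightarrow> real) \<Rightarrow> (nat \<Rightarrow> real) \<Rightarrow> bool" where
  "parallel_chain \<sigma> X X' \<longleftrightarrow> (\<forall>n. free_segment (\<sigma> n) (X n) (X' n) \<and>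
      phi \<rho> d (P (\<sigma> n) (X n)) = {P (\<sigma> (Suc n)) (X (Suc n))} \<and>
      phi \<rho> d (P (\<sigma> n) (X' n)) = {P (\<sigma> (Suc n)) (X' (Suc n))} \<and>
      0 < X (Suc n) \<and> X (Suc n) < 1 \<and> 0 < X' (Suc n) \<and> X' (Suc n) < 1)"

lemma parallel_chain_commute: "parallel_chain \<sigma> X X' \<Longrightarrow> parallel_chain \<sigma> X' X"
  unfolding parallel_chain_def using free_segment_commute by blast

lemma parallel_chain_exists:
  assumes "free_segment s x x'"
  obtains \<sigma> X X' where "\<sigma> 0 = s" "X 0 = x" "X' 0 = x'" "parallel_chain \<sigma> X X'"
proof -
  let ?free = "\<lambda>(s, x, x'). free_segment s x x'"
  let ?next = "\<lambda>(s, x, x') (s', y, y'). phi \<rho> d (P s x) = {P s' y} \<and> phi \<rho> d (P s x') = {P s' y'} \<and>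
      0 < y \<and> y < 1 \<and> 0 < y' \<and> y' < 1"
  have "\<exists>F. \<forall>n. (?free (F n) \<and> (n = 0 \<longrightarrow> F n = (s, x, x'))) \<and> ?next (F n) (F (Suc n))" (is "\<exists>F. ?chain F")
  proof (rule dependent_nat_choice)
    fix t and n :: nat assume "?free t \<and> (n = 0 \<longrightarrow> t = (s, x, x'))"
    then obtain s0 x0 x0' where t: "t = (s0, x0, x0')" and free: "free_segment s0 x0 x0'" by auto
    from free obtain s' y y' where "free_segment s' y y'" "phi \<rho> d (P s0 x0) = {P s' y}"
      "phi \<rho> d (P s0 x0') = {P s' y'}" "0 < y" "y < 1" "0 < y'" "y' < 1"
      by (rule free_segment_step)
    thus "\<exists>t'. (?free t' \<and> (Suc n = 0 \<longrightarrow> t' = (s, x, x'))) \<and> ?next t t'"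
      unfolding t by (intro exI[of _ "(s', y, y')"]) (simp only: prod.case; blast)
  qed (use assms in simp)
  then obtain F where F: "?chain F" ..
  show thesis
  proof (rule that)
    show "parallel_chain (\<lambda>n. fst (F n)) (\<lambda>n. fst (snd (F n))) (\<lambda>n. snd (snd (F n)))"
      unfolding parallel_chain_def using F by (simp add: case_prod_beta)
  qed (use F in simp_all)
qed

lemma parallel_chain_trajectory:
  assumes "parallel_chain \<sigma> X X'"
  shows "trajectory \<rho> d (\<lambda>n. P (\<sigma> n) (X n))"
  using assms unfolding parallel_chain_def trajectory_def by auto

lemma parallel_chain_unique_trajectory:
  assumes "parallel_chain \<sigma> X X'" "trajectory \<rho> d w" "w 0 = P (\<sigma> 0) (X 0)"
  shows "w = (\<lambda>n. P (\<sigma> n) (X n))"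
proof (rule trajectory_unique_off_Pset[OF parallel_chain_trajectory[OF assms(1)] assms(2)])
  have "free_segment (\<sigma> 0) (X 0) (X' 0)" using assms(1) unfolding parallel_chain_def by blast
  thus "P (\<sigma> 0) (X 0) \<notin> Pset \<rho> d" unfolding free_segment_def by auto
qed (use assms(3) in simp)

lemma parallel_chain_logit_bound:
  assumes "parallel_chain \<sigma> X X'"
  shows "\<bar>logit (X (Suc m)) - logit (X' (Suc m))\<bar> \<le> contraction_rate ^ m * \<bar>logit (X 1) - logit (X' 1)\<bar>"
proof (induction m)
  case (Suc m)
  have "\<bar>logit (X (Suc (Suc m))) - logit (X' (Suc (Suc m)))\<bar> \<le> contraction_rate * \<bar>logit (X (Suc m)) - logit (X' (Suc m))\<bar>"
    by (rule logit_phi_contraction) (use assms in \<open>auto simp: parallel_chain_def\<close>)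
  also have "\<dots> \<le> contraction_rate * (contraction_rate ^ m * \<bar>logit (X 1) - logit (X' 1)\<bar>)"
    using Suc.IH contraction_rate_bounds(3) by (rule mult_left_mono)
  finally show ?case by (simp add: mult.assoc)
qed simp

lemma parallel_chain_converges:
  assumes "parallel_chain \<sigma> X X'"
  shows "(\<lambda>t. \<bar>X t - X' t\<bar>) \<longlonglongrightarrow> 0"
proof (rule LIMSEQ_imp_Suc, rule tendsto_sandwich[OF _ _ tendsto_const])
  let ?C = "\<bar>logit (X 1) - logit (X' 1)\<bar>"
  show "(\<lambda>m. contraction_rate ^ m * ?C) \<longlonglongrightarrow> 0"
    using contraction_rate_bounds by (intro tendsto_mult_left_zero LIMSEQ_power_zero) simp_all
  have "\<bar>X (Suc m) - X' (Suc m)\<bar> \<le> contraction_rate ^ m * ?C" for m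
  proof -
    have "0 < X (Suc m)" "X (Suc m) < 1" "0 < X' (Suc m)" "X' (Suc m) < 1"
      using assms unfolding parallel_chain_def by blast+
    hence "\<bar>X (Suc m) - X' (Suc m)\<bar> \<le> \<bar>logit (X (Suc m)) - logit (X' (Suc m))\<bar>"
      by (rule abs_diff_le_abs_logit_diff)
    also have "\<dots> \<le> contraction_rate ^ m * ?C" by (rule parallel_chain_logit_bound[OF assms])
    finally show ?thesis .
  qed
  thus "\<forall>\<^sub>F m in sequentially. \<bar>X (Suc m) - X' (Suc m)\<bar> \<le> contraction_rate ^ m * ?C" by simp
qed simp

lemma trajectory_orbit_walk:
  assumes "periodic_orbit \<rho> d m u" "1 \<le> n" "n \<le> m"
  shows "trajectory \<rho> d (orbit_walk m u n)"
  unfolding trajectory_def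
proof
  fix t
  let ?r = "(n - 1 + t) mod m"
  have r: "?r < m" using assms by simp
  have succ: "(n - 1 + Suc t) mod m = (if Suc ?r = m then 0 else Suc ?r)" by (simp add: mod_Suc)
  show "orbit_walk m u n (Suc t) \<in> phi \<rho> d (orbit_walk m u n t)"
  proof (cases "Suc ?r = m")
    case False
    hence "Suc ?r \<in> {1..<m}" using r by auto
    thus ?thesis using assms(1) succ False unfolding orbit_walk_def periodic_orbit_def by auto
  qed (use assms(1) succ in \<open>simp add: orbit_walk_def periodic_orbit_def\<close>)
qed

lemma free_segments_near:
  assumes "0 \<le> x" "x \<le> 1" "P i x \<notin> closure (Pset \<rho> d)"
  shows "\<exists>\<epsilon>>0. \<forall>x'\<in>{0..1}. \<bar>x' - x\<bar> < \<epsilon> \<longrightarrow> free_segment i x x'"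
proof -
  obtain e where "0 < e" and e: "ball (P i x) e \<subseteq> - closure (Pset \<rho> d)"
    using assms(3) open_contains_ball[of "- closure (Pset \<rho> d)"] by auto
  have "free_segment i x x'" if "x' \<in> {0..1}" "\<bar>x' - x\<bar> < e / sqrt 2" for x'
    unfolding free_segment_def
  proof (intro conjI ballI)
    fix q assume "q \<in> {min x x'..max x x'}"
    hence "\<bar>x - q\<bar> \<le> \<bar>x' - x\<bar>" by auto
    hence "sqrt 2 * \<bar>x - q\<bar> < e"
      using that(2) by (simp add: field_simps) (meson le_less_trans mult_right_mono real_sqrt_ge_zero zero_le_numeral)
    hence "P i q \<in> ball (P i x) e" by (simp add: dist_P)
    thus "P i q \<notin> Pset \<rho> d" using e closure_subset by blast
  qed (use assms that in auto)
  moreover have "0 < e / sqrt 2" using \<open>0 < e\<close> by simp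
  ultimately show ?thesis by blast
qed

lemma converges_near_off_closure:
  assumes "0 \<le> x" "x \<le> 1" "P i x \<notin> closure (Pset \<rho> d)"
    and w0: "trajectory \<rho> d w0" "w0 0 = P i x" "converges_onto w0 m u"
  shows "\<exists>\<epsilon>>0. \<forall>z'\<in>Nbhd \<epsilon> i x. (\<exists>!w. trajectory \<rho> d w \<and> w 0 = z') \<and>
            (\<forall>w. trajectory \<rho> d w \<and> w 0 = z' \<longrightarrow> converges_onto w m u)"
proof -
  obtain \<epsilon> where "0 < \<epsilon>" and near: "\<forall>x'\<in>{0..1}. \<bar>x' - x\<bar> < \<epsilon> \<longrightarrow> free_segment i x x'"
    using free_segments_near[OF assms(1-3)] by blast
  have "(\<exists>!w. trajectory \<rho> d w \<and> w 0 = z') \<and> (\<forall>w. trajectory \<rho> d w \<and> w 0 = z' \<longrightarrow> converges_onto w m u)"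
    if z': "z' \<in> Nbhd \<epsilon> i x" for z'
  proof -
    obtain x' where x': "0 \<le> x'" "x' \<le> 1" "z' = P i x'" "\<bar>x' - x\<bar> < \<epsilon>"
      using z' unfolding Nbhd_def by blast
    have "free_segment i x x'" using x' near by auto
    then obtain \<sigma> X X' where ch: "\<sigma> 0 = i" "X 0 = x" "X' 0 = x'" "parallel_chain \<sigma> X X'"
      by (rule parallel_chain_exists)
    let ?w = "\<lambda>t. P (\<sigma> t) (X' t)"
    have w0_eq: "w0 = (\<lambda>t. P (\<sigma> t) (X t))"
      using parallel_chain_unique_trajectory[OF ch(4) w0(1)] w0(2) ch by simp
    have unique: "w = ?w" if "trajectory \<rho> d w" "w 0 = z'" for w
      using parallel_chain_unique_trajectory[OF parallel_chain_commute[OF ch(4)] that(1)] that(2) ch x' by simp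
    have "converges_onto ?w m u"
    proof (rule converges_onto_asymptotic[OF w0(3)])
      show "(\<lambda>t. dist1 (?w t) (w0 t)) \<longlonglongrightarrow> 0"
        unfolding w0_eq dist1_P using parallel_chain_converges[OF parallel_chain_commute[OF ch(4)]] .
    qed
    moreover have "trajectory \<rho> d ?w" "?w 0 = z'"
      using parallel_chain_trajectory[OF parallel_chain_commute[OF ch(4)]] ch x' by auto
    ultimately show ?thesis using unique by blast
  qed
  thus ?thesis using \<open>0 < \<epsilon>\<close> by blast
qed

lemma periodic_orbit_stable:
  assumes po: "periodic_orbit \<rho> d m u" and off: "\<forall>n\<in>{1..m}. u n \<notin> closure (Pset \<rho> d)"
  shows "stable \<rho> d m u"
  unfolding stable_def
proof (intro ballI allI impI)
  fix n i x assume n: "n \<in> {1..m}" and x: "0 \<le> x \<and> x \<le> 1 \<and> u n = P i x"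
  have "\<exists>\<epsilon>>0. \<forall>z'\<in>Nbhd \<epsilon> i x. (\<exists>!w. trajectory \<rho> d w \<and> w 0 = z') \<and>
            (\<forall>w. trajectory \<rho> d w \<and> w 0 = z' \<longrightarrow> converges_onto w m u)"
  proof (rule converges_near_off_closure)
    show "trajectory \<rho> d (orbit_walk m u n)" using trajectory_orbit_walk[OF po] n by auto
    show "orbit_walk m u n 0 = P i x" using orbit_walk_0 n x by auto
    show "converges_onto (orbit_walk m u n) m u" using converges_onto_orbit_walk n by auto
    show "P i x \<notin> closure (Pset \<rho> d)" using off n x by metis
  qed (use off n x in \<open>auto simp del: atLeastAtMost_iff\<close>)
  thus "\<exists>\<epsilon>>0. \<forall>z'\<in>Nbhd \<epsilon> i x. \<forall>w. trajectory \<rho> d w \<and> w 0 = z' \<longrightarrow> converges_onto w m u"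
    by blast
qed

section \<open>Finitely many pre-images\<close>

lemma periodic_orbitI:
  assumes "1 \<le> p" "\<And>n. 1 \<le> n \<Longrightarrow> v (Suc n) \<in> phi \<rho> d (v n)" "v (Suc p) = v 1"
  shows "periodic_orbit \<rho> d p v"
  unfolding periodic_orbit_def using assms by (metis atLeastLessThan_iff)

lemma periodic_trajectory_converges:
  assumes w: "trajectory \<rho> d w" and p: "1 \<le> p" and per: "\<And>t. w (t + p) = w t"
  shows "periodic_orbit \<rho> d p w" "converges_onto w p w"
proof -
  show "periodic_orbit \<rho> d p w"
    by (rule periodic_orbitI[OF p]) (use w per[of 1] in \<open>auto simp: trajectory_def\<close>)
  have "w (p * t + n + 0) = w n" for n t
    using periodic_multiple[of w p, OF per, of n t] by (simp add: add.commute mult.commute)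
  thus "converges_onto w p w"
    unfolding converges_onto_def by (intro exI[of _ 0]) (simp add: dist1_def)
qed

lemma trajectory_backward_unique:
  assumes w: "trajectory \<rho> d w" and "w i = w j" "k \<le> i" "k \<le> j"
  shows "w (i - k) = w (j - k)"
  using assms(3,4)
proof (induction k)
  case (Suc k)
  have "w (Suc (i - Suc k)) \<in> phi \<rho> d (w (i - Suc k))" "w (Suc (j - Suc k)) \<in> phi \<rho> d (w (j - Suc k))"
    using w unfolding trajectory_def by blast+
  moreover have "w (Suc (i - Suc k)) = w (Suc (j - Suc k))" using Suc by (simp add: Suc_diff_Suc)
  ultimately show ?case using phi_predecessor_unique by metis
qed (use assms in simp)

text \<open>Inside \<open>\<P>\<close> forward steps need not be unique (a decision point has two successors), so a
  repetition is pulled back along the unique predecessors rather than pushed forward.\<close>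

lemma trajectory_periodic_upto:
  assumes w: "trajectory \<rho> d w" and F: "finite F" "range w \<subseteq> F"
  shows "\<exists>p\<in>{1..card F}. \<forall>j\<le>T. w (j + p) = w j"
proof -
  have "\<not> inj_on w {T..T + card F}"
  proof
    assume "inj_on w {T..T + card F}"
    hence "card (w ` {T..T + card F}) = card F + 1" by (simp add: card_image)
    moreover have "card (w ` {T..T + card F}) \<le> card F" using F by (intro card_mono) auto
    ultimately show False by simp
  qed
  then obtain a b where ab: "a \<in> {T..T + card F}" "b \<in> {T..T + card F}" "a < b" "w a = w b"
    unfolding inj_on_def by (metis linorder_neqE_nat)
  have "w (j + (b - a)) = w j" if "j \<le> T" for j
    using trajectory_backward_unique[OF w ab(4), of "a - j"] ab that by (simp add: add.commute)
  thus ?thesis using ab by (intro bexI[of _ "b - a"]) auto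
qed

lemma trajectory_periodic_if_finite:
  assumes w: "trajectory \<rho> d w" and F: "finite F" "range w \<subseteq> F"
  obtains p where "1 \<le> p" "\<And>t. w (t + p) = w t"
proof -
  have "\<exists>p\<in>{1..card F}. \<forall>t. w (t + p) = w t"
  proof (rule ccontr)
    assume "\<not> ?thesis"
    then obtain J where J: "\<And>p. p \<in> {1..card F} \<Longrightarrow> w (J p + p) \<noteq> w (J p)" by metis
    obtain p where p: "p \<in> {1..card F}" "\<forall>j\<le>Max (J ` {1..card F}). w (j + p) = w j"
      using trajectory_periodic_upto[OF assms] by blast
    have "J p \<le> Max (J ` {1..card F})" using p(1) by (intro Max_ge) auto
    thus False using p J by blast
  qed
  thus thesis using that by auto
qed

definition Pset_below :: "3 \<Rightarrow> real \<Rightarrow> real set" where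
  "Pset_below s x = {q. 0 \<le> q \<and> q < x \<and> P s q \<in> Pset \<rho> d}"

lemma finite_range_Pset_below:
  assumes "finite (Pset \<rho> d)"
  shows "finite (range (\<lambda>(s, x). (s, Pset_below s x)))"
proof -
  define Q where "Q = (\<Union>s. P s -` Pset \<rho> d)"
  have "finite Q" unfolding Q_def using assms inj_P by (intro finite_UN_I finite_vimageI) auto
  moreover have "range (\<lambda>(s, x). (s, Pset_below s x)) \<subseteq> UNIV \<times> Pow Q"
    unfolding Q_def Pset_below_def by auto
  moreover have "finite (UNIV \<times> Pow Q :: (3 \<times> real set) set)" using \<open>finite Q\<close> by simp
  ultimately show ?thesis using finite_subset by blast
qed

lemma free_segment_if_same_Pset_below:
  assumes "0 \<le> x" "x \<le> 1" "0 \<le> x'" "x' \<le> 1" "P s x \<notin> Pset \<rho> d" "P s x' \<notin> Pset \<rho> d"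
    and "Pset_below s x = Pset_below s x'"
  shows "free_segment s x x'"
  unfolding free_segment_def
proof (intro conjI ballI)
  fix q assume q: "q \<in> {min x x'..max x x'}"
  show "P s q \<notin> Pset \<rho> d"
  proof
    assume "P s q \<in> Pset \<rho> d"
    moreover have "q \<noteq> x" "q \<noteq> x'" "0 \<le> q" using assms q calculation by auto
    ultimately have "q \<in> Pset_below s x \<longleftrightarrow> q \<notin> Pset_below s x'"
      using q unfolding Pset_below_def by auto
    thus False using assms(7) by simp
  qed
qed (use assms in auto)

lemma phi_closed_graph:
  assumes step: "\<And>k. phi \<rho> d (P s (a k)) = {P s' (b k)}"
    and a: "a \<longlonglongrightarrow> y" and b: "b \<longlonglongrightarrow> y'"
  shows "P s' y' \<in> phi \<rho> d (P s y)"
proof -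
  have a01: "0 \<le> a k" "a k \<le> 1" for k using step[of k] phi_P_domain[of "P s' (b k)" s "a k"] by auto
  hence y01: "0 \<le> y" "y \<le> 1" using a by (auto intro: LIMSEQ_le_const LIMSEQ_le_const2)
  have ev: "\<forall>\<^sub>F k in sequentially. a k \<in> {0..1}" using a01 by simp
  note cases = phi_singleton_cases[OF a01 step]
  show ?thesis
  proof (cases "s' = s + 1")
    case True
    hence L: "a k < d s" "b k = left_map s (a k)" for k using cases[of k] plus_3_simps(3)[of s] by auto
    have "y \<le> d s" using L(1) by (intro LIMSEQ_le_const2[OF a]) (auto intro: less_imp_le)
    moreover have "b \<longlonglongrightarrow> left_map s y"
      unfolding L(2) by (rule continuous_on_tendsto_compose[OF continuous_on_left_map a]) (use y01 ev in auto)
    ultimately show ?thesis using LIMSEQ_unique[OF b] phi_P[OF y01, of s] True by auto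
  next
    case False
    hence R: "d s < a k" "s' = s + 2" "b k = right_map s (a k)" for k using cases[of k] by auto
    have "d s \<le> y" using R(1) by (intro LIMSEQ_le_const[OF a]) (auto intro: less_imp_le)
    moreover have "b \<longlonglongrightarrow> right_map s y"
      unfolding R(3) by (rule continuous_on_tendsto_compose[OF continuous_on_right_map a]) (use y01 ev in auto)
    ultimately show ?thesis using LIMSEQ_unique[OF b] phi_P[OF y01, of s] R(2) by auto
  qed
qed

lemma shifted_chain_limits:
  assumes ch: "parallel_chain \<sigma> X X'" and p: "1 \<le> p" and shift: "\<And>j. X (j + p) = X' j"
    and n: "1 \<le> n"
  obtains y where "0 < y" "y < 1" "(\<lambda>k. X (n + k * p)) \<longlonglongrightarrow> y"
proof -
  define C where "C = \<bar>logit (X 1) - logit (X' 1)\<bar>"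
  have "convergent (\<lambda>k. logit (X (n + k * p)))"
  proof (rule convergent_if_geometric_increments)
    fix k
    have e: "n + Suc k * p = Suc (n - 1 + k * p) + p" "n + k * p = Suc (n - 1 + k * p)" using n by simp_all
    have "\<bar>logit (X (n + Suc k * p)) - logit (X (n + k * p))\<bar> \<le> contraction_rate ^ (n - 1 + k * p) * C"
      using parallel_chain_logit_bound[OF ch, of "n - 1 + k * p"] unfolding e shift C_def
      by (simp add: abs_minus_commute)
    also have "\<dots> \<le> contraction_rate ^ k * C"
      using contraction_rate_bounds p by (intro mult_right_mono power_decreasing) (auto simp: C_def trans_le_add2)
    finally show "\<bar>logit (X (n + Suc k * p)) - logit (X (n + k * p))\<bar> \<le> C * contraction_rate ^ k"
      by (simp add: mult.commute)
  qed (use contraction_rate_bounds in auto)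
  then obtain l where "(\<lambda>k. logit (X (n + k * p))) \<longlonglongrightarrow> l" unfolding convergent_def by blast
  hence "(\<lambda>k. logistic (logit (X (n + k * p)))) \<longlonglongrightarrow> logistic l" by (rule tendsto_logistic)
  moreover have "logistic (logit (X (n + k * p))) = X (n + k * p)" for k
  proof -
    have "n + k * p = Suc (n - 1 + k * p)" using n by simp
    hence "0 < X (n + k * p)" "X (n + k * p) < 1" using ch unfolding parallel_chain_def by metis+
    thus ?thesis by (rule logistic_logit)
  qed
  ultimately show thesis using that[of "logistic l"] logistic_bounds[of l] by simp
qed

lemma shifted_chain_converges:
  assumes ch: "parallel_chain \<sigma> X X'" and p: "1 \<le> p"
    and shift: "\<And>j. \<sigma> (j + p) = \<sigma> j" "\<And>j. X (j + p) = X' j"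
  obtains u where "periodic_orbit \<rho> d p u" "converges_onto (\<lambda>t. P (\<sigma> t) (X t)) p u"
proof -
  have "\<forall>n. \<exists>y. 1 \<le> n \<longrightarrow> (\<lambda>k. X (n + k * p)) \<longlonglongrightarrow> y"
    using shifted_chain_limits[OF ch p shift(2)] by metis
  then obtain Y where Y: "\<And>n. 1 \<le> n \<Longrightarrow> (\<lambda>k. X (n + k * p)) \<longlonglongrightarrow> Y n" by metis
  note \<sigma>_periodic = periodic_multiple[of \<sigma> p, OF shift(1)]
  define u where "u n = P (\<sigma> n) (Y n)" for n
  have "periodic_orbit \<rho> d p u"
  proof (rule periodic_orbitI[OF p])
    fix n :: nat assume n: "1 \<le> n"
    have "phi \<rho> d (P (\<sigma> n) (X (n + k * p))) = {P (\<sigma> (Suc n)) (X (Suc n + k * p))}" for k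
      using ch \<sigma>_periodic[of n k] \<sigma>_periodic[of "Suc n" k] unfolding parallel_chain_def by (metis add_Suc)
    thus "u (Suc n) \<in> phi \<rho> d (u n)"
      unfolding u_def by (rule phi_closed_graph[OF _ Y[OF n] Y]) simp
  next
    have "(\<lambda>k. X (1 + Suc k * p)) \<longlonglongrightarrow> Y 1" using LIMSEQ_Suc[OF Y[of 1]] by simp
    moreover have "(\<lambda>k. X (1 + Suc k * p)) \<longlonglongrightarrow> Y (Suc p)"
      using Y[of "Suc p"] by (simp add: algebra_simps)
    ultimately show "u (Suc p) = u 1"
      unfolding u_def using LIMSEQ_unique shift(1)[of 1] by (metis add.commute plus_1_eq_Suc)
  qed
  moreover have "converges_onto (\<lambda>t. P (\<sigma> t) (X t)) p u"
    unfolding converges_onto_def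
  proof (intro exI[of _ 0] ballI)
    fix n assume "n \<in> {1..p}"
    hence "(\<lambda>t. \<bar>X (n + t * p) - Y n\<bar>) \<longlonglongrightarrow> 0" using tendsto_rabs_zero[OF LIM_zero[OF Y]] by simp
    thus "(\<lambda>t. dist1 (P (\<sigma> (p * t + n + 0)) (X (p * t + n + 0))) (u n)) \<longlonglongrightarrow> 0"
      unfolding u_def using \<sigma>_periodic by (simp add: dist1_P add.commute mult.commute)
  qed
  ultimately show thesis by (rule that)
qed

lemma eventually_off_Pset_free_return:
  assumes w: "trajectory \<rho> d w" and fin: "finite (Pset \<rho> d)"
    and off: "\<And>t. T \<le> t \<Longrightarrow> w t \<notin> Pset \<rho> d" and "1 \<le> T"
  obtains t1 t2 s x1 x2 where "T \<le> t1" "t1 < t2" "w t1 = P s x1" "w t2 = P s x2" "free_segment s x1 x2"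
proof -
  have "\<forall>t. \<exists>s x. T \<le> t \<longrightarrow> 0 < x \<and> x < 1 \<and> w t = P s x"
    using trajectory_interior[OF w] \<open>1 \<le> T\<close> by (metis less_le_trans zero_less_one)
  then obtain \<sigma>0 x0 where pos: "\<And>t. T \<le> t \<Longrightarrow> 0 < x0 t \<and> x0 t < 1 \<and> w t = P (\<sigma>0 t) (x0 t)"
    by metis
  define g where "g t = (\<sigma>0 t, Pset_below (\<sigma>0 t) (x0 t))" for t
  have "g ` {T..} \<subseteq> range (\<lambda>(s, x). (s, Pset_below s x))" unfolding g_def by auto
  hence "finite (g ` {T..})" using finite_range_Pset_below[OF fin] finite_subset by blast
  then obtain t1 t2 where t12: "T \<le> t1" "t1 < t2" "g t1 = g t2" by (rule pigeonhole_from)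
  define s where "s = \<sigma>0 t1"
  have "\<sigma>0 t1 = \<sigma>0 t2 \<and> Pset_below (\<sigma>0 t1) (x0 t1) = Pset_below (\<sigma>0 t2) (x0 t2)"
    using t12(3) unfolding g_def prod.inject .
  hence s: "\<sigma>0 t2 = s" "Pset_below s (x0 t1) = Pset_below s (x0 t2)"
    unfolding s_def by metis+
  have x01: "0 < x0 t1" "x0 t1 < 1" "0 < x0 t2" "x0 t2 < 1" and w12: "w t1 = P s (x0 t1)" "w t2 = P s (x0 t2)"
    using pos[of t1] pos[of t2] t12(1,2) s(1) unfolding s_def by auto
  have "free_segment s (x0 t1) (x0 t2)"
  proof (rule free_segment_if_same_Pset_below)
    show "P s (x0 t1) \<notin> Pset \<rho> d" "P s (x0 t2) \<notin> Pset \<rho> d"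
      using off[of t1] off[of t2] t12(1,2) unfolding w12[symmetric] by auto
  qed (use x01 s(2) in auto)
  thus thesis using that t12(1,2) w12 by blast
qed

lemma converges_if_eventually_off_Pset:
  assumes w: "trajectory \<rho> d w" and fin: "finite (Pset \<rho> d)"
    and off: "\<And>t. T \<le> t \<Longrightarrow> w t \<notin> Pset \<rho> d" and "1 \<le> T"
  obtains m u where "periodic_orbit \<rho> d m u" "converges_onto w m u"
proof -
  obtain t1 t2 s x1 x2 where t12: "T \<le> t1" "t1 < t2" and w12: "w t1 = P s x1" "w t2 = P s x2"
    and free: "free_segment s x1 x2"
    using eventually_off_Pset_free_return[OF assms] by blast
  obtain \<sigma> X X' where ch: "\<sigma> 0 = s" "X 0 = x1" "X' 0 = x2" "parallel_chain \<sigma> X X'"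
    using free by (rule parallel_chain_exists)
  have E1: "(\<lambda>j. w (t1 + j)) = (\<lambda>j. P (\<sigma> j) (X j))"
    using parallel_chain_unique_trajectory[OF ch(4) trajectory_shift[OF w]] w12 ch by simp
  have E2: "(\<lambda>j. w (t2 + j)) = (\<lambda>j. P (\<sigma> j) (X' j))"
    using parallel_chain_unique_trajectory[OF parallel_chain_commute[OF ch(4)] trajectory_shift[OF w]] w12 ch
    by simp
  define p where "p = t2 - t1"
  have p: "1 \<le> p" using t12 unfolding p_def by simp
  have "\<sigma> (j + p) = \<sigma> j \<and> X (j + p) = X' j" for j
  proof -
    have "P (\<sigma> (j + p)) (X (j + p)) = P (\<sigma> j) (X' j)"
      using fun_cong[OF E1, of "j + p"] fun_cong[OF E2, of j] t12 unfolding p_def by (simp add: algebra_simps)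
    moreover have "j + p = Suc (j + p - 1)" using p by simp
    hence "0 < X (j + p)" "X (j + p) < 1" using ch(4) unfolding parallel_chain_def by metis+
    ultimately show ?thesis using P_inject_interior by metis
  qed
  then obtain u where "periodic_orbit \<rho> d p u" "converges_onto (\<lambda>t. P (\<sigma> t) (X t)) p u"
    using shifted_chain_converges[OF ch(4) p] by metis
  thus thesis using that converges_onto_shift E1 by metis
qed

lemma trajectory_converges_if_Pset_finite:
  assumes w: "trajectory \<rho> d w" and fin: "finite (Pset \<rho> d)"
  shows "\<exists>m u. periodic_orbit \<rho> d m u \<and> converges_onto w m u"
proof (cases "range w \<subseteq> Pset \<rho> d")
  case True
  then obtain p where "1 \<le> p" "\<And>t. w (t + p) = w t" using trajectory_periodic_if_finite[OF w fin] by blast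
  thus ?thesis using periodic_trajectory_converges[OF w] by blast
next
  case False
  then obtain t0 where t0: "w t0 \<notin> Pset \<rho> d" by blast
  have "w t \<notin> Pset \<rho> d" if "Suc t0 \<le> t" for t
    using trajectory_Pset_before[OF w, of t t0] t0 that by auto
  then obtain m u where "periodic_orbit \<rho> d m u" "converges_onto w m u"
    using converges_if_eventually_off_Pset[OF w fin, of "Suc t0"] by auto
  thus ?thesis by blast
qed

lemma orbit_walk_period: "1 \<le> n \<Longrightarrow> n \<le> m \<Longrightarrow> orbit_walk m u n m = u n"
  using orbit_walk_periodic[of m u n 0 1] orbit_walk_0 by simp

lemma periodic_orbit_interior:
  assumes po: "periodic_orbit \<rho> d m u" and n: "n \<in> {1..m}"
  obtains s x where "0 < x" "x < 1" "u n = P s x"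
  using trajectory_interior[OF trajectory_orbit_walk[OF po], of n m] orbit_walk_period[of n m u] n
  by (metis atLeastAtMost_iff le_trans less_le_trans zero_less_one)

lemma periodic_orbit_in_Pset:
  assumes po: "periodic_orbit \<rho> d m u" and n: "n \<in> {1..m}" "u n \<in> Pset \<rho> d" and k: "k \<in> {1..m}"
  shows "u k \<in> Pset \<rho> d"
proof -
  have "orbit_walk m u k (n + m - k) \<in> Pset \<rho> d" using orbit_walk_index[of k m n u] k n by auto
  moreover have "trajectory \<rho> d (orbit_walk m u k)" using trajectory_orbit_walk[OF po] k by auto
  ultimately have "orbit_walk m u k 0 \<in> Pset \<rho> d" using trajectory_Pset_before by blast
  thus ?thesis using orbit_walk_0 k by auto
qed

lemma periodic_orbits_eq:
  assumes po: "periodic_orbit \<rho> d m u" and po': "periodic_orbit \<rho> d m' u'"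
    and n: "n \<in> {1..m}" and n': "n' \<in> {1..m'}"
    and u: "u n = P s x" "0 < x" "x < 1" "u n \<notin> Pset \<rho> d"
    and u': "u' n' = P s x'" "0 < x'" "x' < 1" "u' n' \<notin> Pset \<rho> d"
    and below: "Pset_below s x = Pset_below s x'"
  shows "u ` {1..m} = u' ` {1..m'}"
proof -
  have "free_segment s x x'" using u u' below by (intro free_segment_if_same_Pset_below) auto
  then obtain \<sigma> X X' where ch: "\<sigma> 0 = s" "X 0 = x" "X' 0 = x'" "parallel_chain \<sigma> X X'"
    by (rule parallel_chain_exists)
  let ?c = "orbit_walk m u n" and ?c' = "orbit_walk m' u' n'"
  have c: "trajectory \<rho> d ?c" "?c 0 = P s x" "trajectory \<rho> d ?c'" "?c' 0 = P s x'"
    using trajectory_orbit_walk[OF po] trajectory_orbit_walk[OF po'] orbit_walk_0 n n' u u' by auto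
  have Ec: "?c = (\<lambda>t. P (\<sigma> t) (X t))"
    using parallel_chain_unique_trajectory[OF ch(4) c(1)] c(2) ch(1,2) by simp
  have Ec': "?c' = (\<lambda>t. P (\<sigma> t) (X' t))"
    using parallel_chain_unique_trajectory[OF parallel_chain_commute[OF ch(4)] c(3)] c(4) ch(1,3) by simp
  define t where "t k = Suc k * (m * m')" for k
  have "?c (t k) = ?c 0" "?c' (t k) = ?c' 0" for k
    using orbit_walk_periodic[of m u n 0 "Suc k * m'"] orbit_walk_periodic[of m' u' n' 0 "Suc k * m"]
    unfolding t_def by (simp_all add: algebra_simps)
  hence "P s x = P (\<sigma> (t k)) (X (t k))" "P s x' = P (\<sigma> (t k)) (X' (t k))" for k
    unfolding Ec Ec' c(2,4)[unfolded Ec Ec'] by simp_all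
  hence X: "X (t k) = x" "X' (t k) = x'" for k
    using P_inject_interior u(2,3) u'(2,3) by blast+
  have "strict_mono t" using n n' unfolding t_def by (intro strict_monoI) auto
  from LIMSEQ_subseq_LIMSEQ[OF parallel_chain_converges[OF ch(4)] this]
  have "(\<lambda>k. \<bar>x - x'\<bar>) \<longlonglongrightarrow> 0" unfolding o_def X .
  hence "x' = x" by (simp add: LIMSEQ_const_iff)
  hence "?c' = ?c" using c u(1,4) by (intro trajectory_unique_off_Pset) auto
  thus ?thesis using range_orbit_walk n n' by (metis atLeastAtMost_iff)
qed

lemma finite_periodic_orbits:
  assumes fin: "finite (Pset \<rho> d)"
  shows "finite {u ` {1..m} | m u. periodic_orbit \<rho> d m u}"
proof -
  let ?O = "{u ` {1..m} | m u. periodic_orbit \<rho> d m u \<and> (\<forall>k\<in>{1..m}. u k \<notin> Pset \<rho> d)}"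
  define sig where "sig I = (\<lambda>(s, x). (s, Pset_below s x)) ` {(s, x). 0 < x \<and> x < 1 \<and> P s x \<in> I}" for I
  have split: "{u ` {1..m} | m u. periodic_orbit \<rho> d m u} \<subseteq> Pow (Pset \<rho> d) \<union> ?O"
    using periodic_orbit_in_Pset by blast
  have "inj_on sig ?O"
  proof (rule inj_onI)
    fix I I' assume "I \<in> ?O" "I' \<in> ?O" and eq: "sig I = sig I'"
    then obtain m u m' u' where I: "I = u ` {1..m}" "periodic_orbit \<rho> d m u" "\<forall>k\<in>{1..m}. u k \<notin> Pset \<rho> d"
      and I': "I' = u' ` {1..m'}" "periodic_orbit \<rho> d m' u'" "\<forall>k\<in>{1..m'}. u' k \<notin> Pset \<rho> d"
      by blast
    have one: "1 \<in> {1..m}" using I(2) unfolding periodic_orbit_def by simp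
    obtain s x where x: "0 < x" "x < 1" "u 1 = P s x" using periodic_orbit_interior[OF I(2) one] by blast
    have "P s x \<in> I" using x(3) I(1) one by (metis imageI)
    hence "(s, Pset_below s x) \<in> sig I" unfolding sig_def using x by (intro image_eqI[of _ _ "(s, x)"]) auto
    hence "(s, Pset_below s x) \<in> sig I'" using eq by simp
    then obtain x' where x': "0 < x'" "x' < 1" "P s x' \<in> I'" "Pset_below s x = Pset_below s x'"
      unfolding sig_def by auto
    then obtain n' where n': "n' \<in> {1..m'}" "u' n' = P s x'" using I'(1) by auto
    have "u ` {1..m} = u' ` {1..m'}"
      by (rule periodic_orbits_eq[OF I(2) I'(2) one n' (1) x(3,1,2) _ n'(2) x'(1,2) _ x'(4)])
        (use I(3) I'(3) one n'(1) in auto)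
    thus "I = I'" using I(1) I'(1) by simp
  qed
  moreover have "sig ` ?O \<subseteq> Pow (range (\<lambda>(s, x). (s, Pset_below s x)))" unfolding sig_def by blast
  ultimately have "finite ?O" using finite_range_Pset_below[OF fin] by (rule inj_on_finite[OF _ _ finite_Pow_iff[THEN iffD2]])
  thus ?thesis using split fin by (simp add: finite_subset)
qed

end

theorem lemma4p7:
  fixes \<rho> d :: "3 \<Rightarrow> real"
  assumes rho: "\<forall>i. 0 < \<rho> i \<and> \<rho> i < 1"
    and heavy: "\<rho> 1 + \<rho> 2 + \<rho> 3 > 1"
    and dec: "\<forall>i. 0 < d i \<and> d i < 1"
  shows
    "(finite (Pset \<rho> d) \<longrightarrow>
        finite {u ` {1..m} | m u. periodic_orbit \<rho> d m u} \<and>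
        (\<forall>w. trajectory \<rho> d w \<longrightarrow> (\<exists>m u. periodic_orbit \<rho> d m u \<and> converges_onto w m u)))
     \<and>
     (\<forall>i x m u. 0 \<le> x \<and> x \<le> 1 \<and> P i x \<notin> closure (Pset \<rho> d) \<and> periodic_orbit \<rho> d m u \<and>
        (\<exists>w. trajectory \<rho> d w \<and> w 0 = P i x \<and> converges_onto w m u) \<longrightarrow>
        (\<exists>\<epsilon>>0. \<forall>z'\<in>Nbhd \<epsilon> i x.
            (\<exists>!w. trajectory \<rho> d w \<and> w 0 = z') \<and>
            (\<forall>w. trajectory \<rho> d w \<and> w 0 = z' \<longrightarrow> converges_onto w m u)))
     \<and>
     (\<forall>m u. periodic_orbit \<rho> d m u \<and> (\<forall>n\<in>{1..m}. u n \<notin> closure (Pset \<rho> d)) \<longrightarrow>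
        stable \<rho> d m u)"
proof -
  interpret triangle_process \<rho> d using rho heavy dec by unfold_locales
  show ?thesis
    using finite_periodic_orbits trajectory_converges_if_Pset_finite converges_near_off_closure
      periodic_orbit_stable by blast
qed

end
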